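(* Consider the following time-slotted remote tracking system. A source state $X_t$ evolves as a discrete-time Markov chain on $\{0,1,\dots,N\}$ ($N\in\mathbb{Z}_{>0}$) with transition probabilities $P_{i,k}=\Pr\{X_{t+1}=k\mid X_t=i\}$. A receiver holds an estimate $\hat X_t$. At each slot the transmitter chooses $\alpha_t\in\{0,1\}$ ($\alpha_t=1$: sample the source and transmit, incurring cost $c>0$). The channel realization $h_t\in\{0,1\}$ is i.i.d. with $\Pr(h_t=1)=p_s$; if $\alpha_t=1$ and $h_t=1$ the receiver updates $\hat X_{t+1}=X_t$, otherwise $\hat X_{t+1}=\hat X_t$. Given a nonnegative bounded actuation cost matrix $(C_{i,j})$, define, when $X_t=i$ and $\hat X_t=j$, $$g(t)=\begin{cases}\sum_{k=i}^{N} C_{k,j}P_{i,k}(1-p_s)+\sum_{k=i}^{N} C_{k,i}P_{i,k}\,p_s, & \alpha_t=1,\\[1mm] \sum_{k=i}^{N} C_{k,j}P_{i,k}, & \alpha_t=0.\end{cases}$$ Let $c_{\max}$ be a given bound and consider the problem of minimizing $\limsup_{T\to\infty}\frac1T\sum_{t=1}^T\mathbb{E}\{g(t)\}$ subject to $\bar c:=\lim_{T\to\infty}\frac1T\sum_{t=1}^T\mathbb{E}\{\alpha_t c\}\le c_{\max}$. The drift-plus-penalty (DPP) algorithm, with parameter $W>0$, maintains the virtual queue $Z(0)=0$, $Z(t+1)=\max[Z(t)-c_{\max},0]+\alpha_t c$, and at every slot $t$, observing $X_t$, $\hat X_t$ and $Z(t)$, chooses $\alpha_t\in\{0,1\}$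 minimizing $W g(t)+Z(t)(c\alpha_t-c_{\max})$. If the constrained problem is feasible, then the DPP algorithm satisfies the average cost constraint, i.e. $\limsup_{T\to\infty}\frac1T\sum_{t=1}^T\mathbb{E}\{\alpha_t c\}\le c_{\max}$.
   Context: $C_{i,j}$ is the cost of actuation error incurred when the source is in state $i$ while the receiver's estimate is $j$. A policy is a rule selecting $\alpha_t$ at each slot; the problem is feasible if some policy satisfies the average cost constraint. *)

theory Defs
  imports "HOL-Probability.Probability"
begin

text \<open>Source transition probabilities are given row-wise as pmfs: P i k = pmf (Q i) k.\<close>

definition gcost :: "nat \<Rightarrow> (nat \<Rightarrow> nat pmf) \<Rightarrow> real \<Rightarrow> (nat \<Rightarrow> nat \<Rightarrow> real)
    \<Rightarrow> nat \<Rightarrow> nat \<Rightarrow> bool \<Rightarrow> real" where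
  "gcost N Q ps C i j a =
     (if a then (\<Sum>k=i..N. C k j * pmf (Q i) k * (1 - ps)) + (\<Sum>k=i..N. C k i * pmf (Q i) k * ps)
      else (\<Sum>k=i..N. C k j * pmf (Q i) k))"

text \<open>General (history-dependent, randomized) policy: at slot t it sees the history of
  (X_s, Xhat_s, alpha_s, h_s) for s < t and the current (X_t, Xhat_t) and outputs
  a distribution of alpha_t.\<close>

type_synonym hist = "(nat \<times> nat \<times> bool \<times> bool) list"

primrec pol_dist :: "(nat \<Rightarrow> nat pmf) \<Rightarrow> real \<Rightarrow> (nat \<times> nat) pmf
    \<Rightarrow> (hist \<Rightarrow> nat \<Rightarrow> nat \<Rightarrow> bool pmf) \<Rightarrow> nat \<Rightarrow> (hist \<times> nat \<times> nat) pmf" where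
  "pol_dist Q ps \<mu>0 \<pi> 0 = map_pmf (\<lambda>(x, xh). ([], x, xh)) \<mu>0"
| "pol_dist Q ps \<mu>0 \<pi> (Suc t) =
     bind_pmf (pol_dist Q ps \<mu>0 \<pi> t) (\<lambda>(hs, x, xh).
       bind_pmf (\<pi> hs x xh) (\<lambda>a.
       bind_pmf (Q x) (\<lambda>x'.
       bind_pmf (bernoulli_pmf ps) (\<lambda>h.
       return_pmf (hs @ [(x, xh, a, h)], x', if a \<and> h then x else xh)))))"

definition pol_avg_cost :: "(nat \<Rightarrow> nat pmf) \<Rightarrow> real \<Rightarrow> (nat \<times> nat) pmf
    \<Rightarrow> (hist \<Rightarrow> nat \<Rightarrow> nat \<Rightarrow> bool pmf) \<Rightarrow> real \<Rightarrow> nat \<Rightarrow> real" where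
  "pol_avg_cost Q ps \<mu>0 \<pi> c T =
     (1 / real T) * (\<Sum>t<T. measure_pmf.expectation (pol_dist Q ps \<mu>0 \<pi> t)
                         (\<lambda>(hs, x, xh). c * pmf (\<pi> hs x xh) True))"

definition feasible :: "(nat \<Rightarrow> nat pmf) \<Rightarrow> real \<Rightarrow> (nat \<times> nat) pmf \<Rightarrow> real \<Rightarrow> real \<Rightarrow> bool" where
  "feasible Q ps \<mu>0 c cmax \<longleftrightarrow>
     (\<exists>\<pi>. convergent (pol_avg_cost Q ps \<mu>0 \<pi> c) \<and> lim (pol_avg_cost Q ps \<mu>0 \<pi> c) \<le> cmax)"

definition dpp_rule :: "nat \<Rightarrow> (nat \<Rightarrow> nat pmf) \<Rightarrow> real \<Rightarrow> (nat \<Rightarrow> nat \<Rightarrow> real) \<Rightarrow> real \<Rightarrow> real \<Rightarrow> real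
    \<Rightarrow> (nat \<Rightarrow> nat \<Rightarrow> nat \<Rightarrow> real \<Rightarrow> bool pmf) \<Rightarrow> bool" where
  "dpp_rule N Q ps C W c cmax \<delta> \<longleftrightarrow>
     (\<forall>t x xh z. set_pmf (\<delta> t x xh z) \<subseteq>
        {a. \<forall>b. W * gcost N Q ps C x xh a + z * (c * of_bool a - cmax)
                \<le> W * gcost N Q ps C x xh b + z * (c * of_bool b - cmax)})"

primrec dpp_dist :: "(nat \<Rightarrow> nat pmf) \<Rightarrow> real \<Rightarrow> real \<Rightarrow> real \<Rightarrow> (nat \<times> nat) pmf
    \<Rightarrow> (nat \<Rightarrow> nat \<Rightarrow> nat \<Rightarrow> real \<Rightarrow> bool pmf) \<Rightarrow> nat \<Rightarrow> (nat \<times> nat \<times> real) pmf" where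
  "dpp_dist Q ps c cmax \<mu>0 \<delta> 0 = map_pmf (\<lambda>(x, xh). (x, xh, 0)) \<mu>0"
| "dpp_dist Q ps c cmax \<mu>0 \<delta> (Suc t) =
     bind_pmf (dpp_dist Q ps c cmax \<mu>0 \<delta> t) (\<lambda>(x, xh, z).
       bind_pmf (\<delta> t x xh z) (\<lambda>a.
       bind_pmf (Q x) (\<lambda>x'.
       bind_pmf (bernoulli_pmf ps) (\<lambda>h.
       return_pmf (x', if a \<and> h then x else xh, max (z - cmax) 0 + (if a then c else 0))))))"

definition dpp_avg_cost :: "(nat \<Rightarrow> nat pmf) \<Rightarrow> real \<Rightarrow> real \<Rightarrow> real \<Rightarrow> (nat \<times> nat) pmf
    \<Rightarrow> (nat \<Rightarrow> nat \<Rightarrow> nat \<Rightarrow> real \<Rightarrow> bool pmf) \<Rightarrow> nat \<Rightarrow> real" where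
  "dpp_avg_cost Q ps c cmax \<mu>0 \<delta> T =
     (1 / real T) * (\<Sum>t<T. measure_pmf.expectation (dpp_dist Q ps c cmax \<mu>0 \<delta> t)
                         (\<lambda>(x, xh, z). c * pmf (\<delta> t x xh z) True))"

end

theory Submission
  imports Defs
begin

text \<open>A transmission saves at most p_s sup C in actuation cost, while in the drift term it
  costs Z(t) c; so the DPP rule never transmits once Z(t) > W p_s sup C / c. Provided
  c_max \<ge> 0, which is all that feasibility is needed for, the virtual queue therefore stays
  below K = W p_s sup C / c + c on every sample path. As Z(t+1) \<ge> Z(t) - c_max + \<alpha>_t c,
  summing expectations gives sum_{t<T} E[\<alpha>_t c] \<le> E[Z(T)] + T c_max \<le> K + T c_max.\<close>

lemma expectation_bind_pmf_finite:
  fixes f :: "'b \<Rightarrow> real"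
  assumes "finite (set_pmf M)" "\<And>x. x \<in> set_pmf M \<Longrightarrow> finite (set_pmf (N x))"
  shows "measure_pmf.expectation (M \<bind> N) f =
           measure_pmf.expectation M (\<lambda>x. measure_pmf.expectation (N x) f)"
  using assms
  by (simp add: pmf_expectation_bind[where A = "set_pmf M"]
      integral_measure_pmf_real[where A = "set_pmf M"] mult.commute)

lemma expectation_bool_pmf:
  fixes f :: "bool \<Rightarrow> real"
  shows "measure_pmf.expectation p f = pmf p True * f True + (1 - pmf p True) * f False"
  by (subst integral_measure_pmf_real[where A = UNIV]) (auto simp: UNIV_bool pmf_False_conv_True)

lemma sum_le_of_drift:
  fixes e u :: "nat \<Rightarrow> real"
  assumes "\<And>t. t < T \<Longrightarrow> e t - a + u t \<le> e (Suc t)"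
  shows "(\<Sum>t<T. u t) \<le> e T - e 0 + real T * a"
  using assms
proof (induction T)
  case (Suc T)
  have "(\<Sum>t<T. u t) \<le> e T - e 0 + real T * a"
    using Suc by simp
  moreover have "e T - a + u T \<le> e (Suc T)"
    using Suc.prems by simp
  ultimately show ?case
    by (simp add: algebra_simps)
qed simp

lemma limsup_le_of_le_plus_const_over_n:
  fixes f :: "nat \<Rightarrow> real"
  assumes "\<And>n. 0 < n \<Longrightarrow> f n \<le> a + K / real n"
  shows "limsup (\<lambda>n. ereal (f n)) \<le> ereal a"
proof -
  have "limsup (\<lambda>n. ereal (f n)) \<le> limsup (\<lambda>n. ereal (a + K / real n))"
    using assms by (intro Limsup_mono) (auto simp: eventually_sequentially intro!: exI[of _ 1])
  also have "\<dots> = ereal a"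
    using tendsto_add[OF tendsto_const lim_const_over_n[of K], of a]
    by (intro lim_imp_Limsup) simp_all
  finally show ?thesis .
qed

lemma gcost_idle_le_gcost_transmit:
  assumes "0 \<le> ps" "ps \<le> 1" "\<And>i j. 0 \<le> C i j" "\<And>i j. C i j \<le> B"
  shows "gcost N Q ps C x xh False \<le> gcost N Q ps C x xh True + ps * B"
proof -
  define S1 where "S1 = (\<Sum>k=x..N. C k xh * pmf (Q x) k)"
  define S2 where "S2 = (\<Sum>k=x..N. C k x * pmf (Q x) k)"
  have "S1 \<le> (\<Sum>k=x..N. B * pmf (Q x) k)"
    unfolding S1_def using assms by (intro sum_mono mult_right_mono) auto
  also have "\<dots> = B * measure_pmf.prob (Q x) {x..N}"
    by (simp add: sum_distrib_left measure_measure_pmf_finite)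
  also have "\<dots> \<le> B"
    using assms(3,4)[of 0 0] by (simp add: mult_left_le)
  finally have "S1 \<le> B" .
  then have "ps * S1 \<le> ps * B"
    using assms(1) by (rule mult_left_mono)
  moreover have "0 \<le> ps * S2"
    unfolding S2_def using assms by (intro mult_nonneg_nonneg sum_nonneg) auto
  moreover have "gcost N Q ps C x xh True = (1 - ps) * S1 + ps * S2"
    by (simp add: gcost_def S1_def S2_def sum_distrib_left sum_distrib_right mult_ac)
  moreover have "gcost N Q ps C x xh False = S1"
    by (simp add: gcost_def S1_def)
  ultimately show ?thesis
    by (simp add: algebra_simps)
qed

definition queue_next :: "real \<Rightarrow> real \<Rightarrow> real \<Rightarrow> bool \<Rightarrow> real" where
  "queue_next cmax c z a = max (z - cmax) 0 + (if a then c else 0)"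

lemma queue_next_le:
  assumes "z \<le> M + c" "a \<Longrightarrow> z \<le> M" "0 \<le> M" "0 \<le> c" "0 \<le> cmax"
  shows "queue_next cmax c z a \<le> M + c"
  using assms by (cases a) (auto simp: queue_next_def)

lemma map_queue_dpp_dist_Suc:
  "map_pmf (\<lambda>s. snd (snd s)) (dpp_dist Q ps c cmax \<mu>0 \<delta> (Suc t)) =
     dpp_dist Q ps c cmax \<mu>0 \<delta> t \<bind> (\<lambda>(x, xh, z). map_pmf (queue_next cmax c z) (\<delta> t x xh z))"
  unfolding queue_next_def by (simp add: map_bind_pmf split_def) (simp add: map_pmf_def)

lemma dpp_transmit_imp_queue_le:
  assumes "dpp_rule N Q ps C W c cmax \<delta>" "True \<in> set_pmf (\<delta> t x xh z)"
    and "0 < c" "0 \<le> W" "0 \<le> ps" "ps \<le> 1" "\<And>i j. 0 \<le> C i j" "\<And>i j. C i j \<le> B"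
  shows "z \<le> W * ps * B / c"
proof -
  have "\<forall>b. W * gcost N Q ps C x xh True + z * (c * of_bool True - cmax)
             \<le> W * gcost N Q ps C x xh b + z * (c * of_bool b - cmax)"
    using assms(1,2) unfolding dpp_rule_def by blast
  then have "c * z \<le> W * (gcost N Q ps C x xh False - gcost N Q ps C x xh True)"
    by (auto simp: algebra_simps dest: spec[of _ False])
  also have "\<dots> \<le> W * (ps * B)"
    using gcost_idle_le_gcost_transmit[of ps C B N Q x xh] assms(4-8) by (intro mult_left_mono) auto
  finally show ?thesis
    using assms(3) by (simp add: pos_le_divide_eq mult_ac)
qed

lemma dpp_dist_state_le:
  assumes "\<forall>i\<le>N. set_pmf (Q i) \<subseteq> {..N}" "set_pmf \<mu>0 \<subseteq> {..N} \<times> {..N}"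
  shows "s \<in> set_pmf (dpp_dist Q ps c cmax \<mu>0 \<delta> t) \<Longrightarrow> fst s \<le> N"
proof (induction t arbitrary: s)
  case 0
  then show ?case using assms(2) by auto
next
  case (Suc t)
  then show ?case using assms(1) by (fastforce split: prod.splits)
qed

lemma finite_set_pmf_dpp_dist:
  assumes "\<forall>i\<le>N. set_pmf (Q i) \<subseteq> {..N}" "set_pmf \<mu>0 \<subseteq> {..N} \<times> {..N}"
  shows "finite (set_pmf (dpp_dist Q ps c cmax \<mu>0 \<delta> t))"
proof (induction t)
  case 0
  have "finite (set_pmf \<mu>0)"
    using assms(2) by (rule finite_subset) auto
  then show ?case by simp
next
  case (Suc t)
  have "finite (set_pmf (Q x))" if "(x, xh, z) \<in> set_pmf (dpp_dist Q ps c cmax \<mu>0 \<delta> t)" for x xh z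
    using dpp_dist_state_le[OF assms that] assms(1) by (auto intro: finite_subset)
  then show ?case
    using Suc by (auto split: prod.splits intro!: finite_UN_I)
qed

lemma dpp_dist_queue_le:
  assumes "dpp_rule N Q ps C W c cmax \<delta>" "0 \<le> cmax"
    and "0 < c" "0 \<le> W" "0 \<le> ps" "ps \<le> 1" "\<And>i j. 0 \<le> C i j" "\<And>i j. C i j \<le> B"
  shows "s \<in> set_pmf (dpp_dist Q ps c cmax \<mu>0 \<delta> t) \<Longrightarrow> snd (snd s) \<le> W * ps * B / c + c"
proof (induction t arbitrary: s)
  case 0
  have "0 \<le> B" using assms(7,8) by (meson order_trans)
  with 0 show ?case using assms(3-5) by auto
next
  case (Suc t)
  have "0 \<le> W * ps * B / c" using assms(3-5,7,8) by (meson order_trans mult_nonneg_nonneg divide_nonneg_pos)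
  then have "queue_next cmax c z a \<le> W * ps * B / c + c"
    if "(x, xh, z) \<in> set_pmf (dpp_dist Q ps c cmax \<mu>0 \<delta> t)" "a \<in> set_pmf (\<delta> t x xh z)" for x xh z a
    using Suc.IH[OF that(1)] dpp_transmit_imp_queue_le[OF assms(1) _ assms(3-8)] that(2) assms(2,3)
    by (intro queue_next_le) auto
  with Suc.prems show ?case by (auto simp: queue_next_def split: prod.splits)
qed

lemma dpp_dist_queue_drift:
  assumes "finite (set_pmf (dpp_dist Q ps c cmax \<mu>0 \<delta> t))"
  shows "measure_pmf.expectation (dpp_dist Q ps c cmax \<mu>0 \<delta> t) (\<lambda>s. snd (snd s)) - cmax
           + measure_pmf.expectation (dpp_dist Q ps c cmax \<mu>0 \<delta> t) (\<lambda>(x, xh, z). c * pmf (\<delta> t x xh z) True)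
         \<le> measure_pmf.expectation (dpp_dist Q ps c cmax \<mu>0 \<delta> (Suc t)) (\<lambda>s. snd (snd s))"
    (is "measure_pmf.expectation ?D ?z - cmax + measure_pmf.expectation ?D ?cost \<le> _")
proof -
  have int: "integrable (measure_pmf ?D) f" for f :: "_ \<Rightarrow> real"
    using assms by (rule integrable_measure_pmf_finite)
  have "measure_pmf.expectation ?D ?z - cmax + measure_pmf.expectation ?D ?cost
          = measure_pmf.expectation ?D (\<lambda>(x, xh, z). z - cmax + c * pmf (\<delta> t x xh z) True)"
    by (simp add: int split_def)
  also have "\<dots> \<le> measure_pmf.expectation ?D (\<lambda>(x, xh, z). max (z - cmax) 0 + c * pmf (\<delta> t x xh z) True)"
    by (intro integral_mono int) (auto split: prod.splits)
  also have "\<dots> = measure_pmf.expectation ?D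
                    (\<lambda>(x, xh, z). measure_pmf.expectation (map_pmf (queue_next cmax c z) (\<delta> t x xh z)) id)"
    by (simp add: expectation_bool_pmf queue_next_def split_def algebra_simps)
  also have "\<dots> = measure_pmf.expectation (map_pmf ?z (dpp_dist Q ps c cmax \<mu>0 \<delta> (Suc t))) id"
    unfolding map_queue_dpp_dist_Suc
    by (subst expectation_bind_pmf_finite) (auto simp: assms split_def)
  finally show ?thesis
    by simp
qed

lemma dpp_avg_cost_le:
  assumes fin: "\<And>t. finite (set_pmf (dpp_dist Q ps c cmax \<mu>0 \<delta> t))"
    and queue_le: "\<And>t s. s \<in> set_pmf (dpp_dist Q ps c cmax \<mu>0 \<delta> t) \<Longrightarrow> snd (snd s) \<le> K"
    and "0 < T"
  shows "dpp_avg_cost Q ps c cmax \<mu>0 \<delta> T \<le> cmax + K / real T"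
proof -
  define queue where
    "queue t = measure_pmf.expectation (dpp_dist Q ps c cmax \<mu>0 \<delta> t) (\<lambda>s. snd (snd s))" for t
  have "queue T \<le> measure_pmf.expectation (dpp_dist Q ps c cmax \<mu>0 \<delta> T) (\<lambda>_. K)"
    unfolding queue_def
    by (intro integral_mono_AE integrable_measure_pmf_finite fin AE_pmfI queue_le) simp_all
  moreover have "queue 0 = 0"
    by (simp add: queue_def split_def)
  ultimately have "(\<Sum>t<T. measure_pmf.expectation (dpp_dist Q ps c cmax \<mu>0 \<delta> t)
                                 (\<lambda>(x, xh, z). c * pmf (\<delta> t x xh z) True)) \<le> K + real T * cmax"
    using sum_le_of_drift[of T queue cmax] dpp_dist_queue_drift[OF fin] by (force simp: queue_def)
  then show ?thesis
    using \<open>0 < T\<close> by (simp add: dpp_avg_cost_def field_simps)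
qed

lemma feasible_imp_cmax_nonneg:
  assumes "feasible Q ps \<mu>0 c cmax" "0 \<le> c"
  shows "0 \<le> cmax"
proof -
  obtain \<pi> where conv: "convergent (pol_avg_cost Q ps \<mu>0 \<pi> c)"
    and le: "lim (pol_avg_cost Q ps \<mu>0 \<pi> c) \<le> cmax"
    using assms(1) unfolding feasible_def by blast
  have "0 \<le> pol_avg_cost Q ps \<mu>0 \<pi> c T" for T
    unfolding pol_avg_cost_def using assms(2)
    by (intro mult_nonneg_nonneg sum_nonneg integral_nonneg) (auto split: prod.splits)
  then have "0 \<le> lim (pol_avg_cost Q ps \<mu>0 \<pi> c)"
    using conv by (intro LIMSEQ_le_const) (auto simp: convergent_LIMSEQ_iff)
  with le show ?thesis by simp
qed

theorem theorem2:
  fixes N :: nat and Q :: "nat \<Rightarrow> nat pmf" and ps c cmax W :: real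
    and C :: "nat \<Rightarrow> nat \<Rightarrow> real" and \<mu>0 :: "(nat \<times> nat) pmf"
    and \<delta> :: "nat \<Rightarrow> nat \<Rightarrow> nat \<Rightarrow> real \<Rightarrow> bool pmf"
  assumes "N > 0"
    and "\<forall>i\<le>N. set_pmf (Q i) \<subseteq> {..N}"
    and "set_pmf \<mu>0 \<subseteq> {..N} \<times> {..N}"
    and "0 \<le> ps" "ps \<le> 1"
    and "c > 0" "W > 0"
    and "\<forall>i j. 0 \<le> C i j" "\<exists>B. \<forall>i j. C i j \<le> B"
    and "feasible Q ps \<mu>0 c cmax"
    and "dpp_rule N Q ps C W c cmax \<delta>"
  shows "limsup (\<lambda>T. ereal (dpp_avg_cost Q ps c cmax \<mu>0 \<delta> T)) \<le> ereal cmax"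
proof -
  obtain B where "\<forall>i j. C i j \<le> B"
    using assms(9) by blast
  moreover have "0 \<le> cmax"
    using feasible_imp_cmax_nonneg assms(6,10) by auto
  ultimately have "s \<in> set_pmf (dpp_dist Q ps c cmax \<mu>0 \<delta> t) \<Longrightarrow> snd (snd s) \<le> W * ps * B / c + c" for s t
    using dpp_dist_queue_le[OF assms(11)] assms(4-8) by auto
  then have "dpp_avg_cost Q ps c cmax \<mu>0 \<delta> T \<le> cmax + (W * ps * B / c + c) / real T" if "0 < T" for T
    using dpp_avg_cost_le finite_set_pmf_dpp_dist[OF assms(2,3)] that by blast
  then show ?thesis
    by (rule limsup_le_of_le_plus_const_over_n)
qed

end
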